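(* Let $T\ge 0$ be the number of attacking rounds. If $T=0$, then the privacy leakage is $V_p=0$. Suppose $T>0$ and the assumptions in the context hold. Then $$V_p\ \ge\ \underline V_p:=1-\frac{c_b\Delta+c_bc_2T^{p-1}}{D},$$ and $V_p\le 1$; moreover, if $\Delta\ge\frac{2c_2c_b}{c_a}T^{p-1}$ or $\Delta\le\frac{c_ac_0}{2c_b}T^{p-1}$, then $$V_p\ \le\ \overline V_p:=1-\frac{c_a\Delta+c_ac_0T^{p-1}}{4D}.$$
   Context: A client has original private data $s_o$ and original gradient $w_o=g(s_o)$, where $g(s)=\partial\mathcal L(s,w)/\partial w$. The client releases a protected gradient $w_d$; let $s_d$ be data with $g(s_d)=w_d$, and let the protection extent be $\Delta=\|w_d-w_o\|=\|g(s_d)-g(s_o)\|$. A semi-honest attacker runs an optimization algorithm producing reconstructions $s_1,\dots,s_T$. Privacy leakage: $V_p=1-\frac1D\cdot\frac1T\sum_{t=1}^T\|s_t-s_o\|$ for $T>0$ and $V_p=0$ for $T=0$. Assumptions: constants $D,c_a,c_b,c_0,c_2>0$, $p\in(0,1)$; for all data $s_1,s_2$, $c_a\|g(s_1)-g(s_2)\|\le\|s_1-s_2\|\le c_b\|g(s_1)-g(s_2)\|$ (with $c_a\le c_b$); the regret bound $c_0T^p\le\sum_{t=1}^T\|g(s_t)-g(s_d)\|\le c_2T^p$ holds (with $c_0\le c_2$); $\|s_t-s_o\|\in[0,D]$ for all $t$; and $c_b+c_bc_2\le D$, $\frac{2c_2c_b}{c_a}\le D$. *)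

theory Defs
  imports "HOL-Analysis.Analysis"
begin

definition privacy_leakage :: "real \<Rightarrow> nat \<Rightarrow> (nat \<Rightarrow> 'a::real_normed_vector) \<Rightarrow> 'a \<Rightarrow> real" where
  "privacy_leakage D T s s_o =
     (if T = 0 then 0 else 1 - (1 / D) * (1 / real T) * (\<Sum>t=1..T. norm (s t - s_o)))"

end

theory Submission
  imports Defs
begin

text \<open>For T > 0 the leakage is 1 - e/D, where e is the mean reconstruction error. Comparing
  s_t with s_o through the bi-Lipschitz map g and the triangle inequality at g(s_d) gives
  c_a |a - \<Delta>| \<le> e \<le> c_b (a + \<Delta>), where a is the mean gradient gap, and the regret bound pins
  a between c_0 T^(p-1) and c_2 T^(p-1). When \<Delta> is far from this window, |a - \<Delta>| is at least
  a quarter of \<Delta> + c_0 T^(p-1).\<close>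

lemma privacy_leakage_eq_mean_error:
  assumes "T > 0"
  shows "privacy_leakage D T s s_o = 1 - ((\<Sum>t=1..T. norm (s t - s_o)) / real T) / D"
  using assms by (simp add: privacy_leakage_def)

lemma sum_norm_le_via_gradient:
  fixes g :: "'a::real_normed_vector \<Rightarrow> 'b::real_normed_vector"
  assumes "c \<ge> 0" and "\<And>t. t \<in> A \<Longrightarrow> norm (s t - z) \<le> c * norm (g (s t) - g z)"
  shows "(\<Sum>t\<in>A. norm (s t - z))
           \<le> c * ((\<Sum>t\<in>A. norm (g (s t) - g y)) + real (card A) * norm (g y - g z))"
proof -
  have "norm (s t - z) \<le> c * (norm (g (s t) - g y) + norm (g y - g z))" if "t \<in> A" for t
  proof -
    have "norm (g (s t) - g z) \<le> norm (g (s t) - g y) + norm (g y - g z)"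
      using norm_triangle_ineq[of "g (s t) - g y" "g y - g z"] by simp
    with assms that show ?thesis by (meson mult_left_mono order_trans)
  qed
  then have "(\<Sum>t\<in>A. norm (s t - z)) \<le> (\<Sum>t\<in>A. c * (norm (g (s t) - g y) + norm (g y - g z)))"
    by (rule sum_mono)
  then show ?thesis by (simp add: sum.distrib distrib_left sum_distrib_left mult.left_commute)
qed

lemma sum_norm_ge_via_gradient:
  fixes g :: "'a::real_normed_vector \<Rightarrow> 'b::real_normed_vector"
  assumes "c \<ge> 0" and "\<And>t. t \<in> A \<Longrightarrow> c * norm (g (s t) - g z) \<le> norm (s t - z)"
  shows "c * \<bar>(\<Sum>t\<in>A. norm (g (s t) - g y)) - real (card A) * norm (g y - g z)\<bar>
           \<le> (\<Sum>t\<in>A. norm (s t - z))"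
proof -
  have step: "c * \<bar>norm (g (s t) - g y) - norm (g y - g z)\<bar> \<le> norm (s t - z)" if "t \<in> A" for t
  proof -
    have "\<bar>norm (g (s t) - g y) - norm (g z - g y)\<bar> \<le> norm (g (s t) - g z)"
      using norm_triangle_ineq3[of "g (s t) - g y" "g z - g y"] by simp
    with assms that show ?thesis
      by (metis (no_types, opaque_lifting) mult_left_mono norm_minus_commute order_trans)
  qed
  have "\<bar>(\<Sum>t\<in>A. norm (g (s t) - g y)) - real (card A) * norm (g y - g z)\<bar>
          = \<bar>\<Sum>t\<in>A. norm (g (s t) - g y) - norm (g y - g z)\<bar>"
    by (simp add: sum_subtractf)
  also have "\<dots> \<le> (\<Sum>t\<in>A. \<bar>norm (g (s t) - g y) - norm (g y - g z)\<bar>)"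
    by (rule sum_abs)
  finally have "c * \<bar>(\<Sum>t\<in>A. norm (g (s t) - g y)) - real (card A) * norm (g y - g z)\<bar>
                  \<le> (\<Sum>t\<in>A. c * \<bar>norm (g (s t) - g y) - norm (g y - g z)\<bar>)"
    using assms(1) by (simp add: mult_left_mono flip: sum_distrib_left)
  also have "\<dots> \<le> (\<Sum>t\<in>A. norm (s t - z))"
    using step by (rule sum_mono)
  finally show ?thesis .
qed

lemma abs_diff_ge_quarter_outside_window:
  fixes a \<Delta> lo hi :: real
  assumes "0 \<le> lo" "lo \<le> a" "a \<le> hi" and "2 * hi \<le> \<Delta> \<or> \<Delta> \<le> lo / 2"
  shows "(\<Delta> + lo) / 4 \<le> \<bar>a - \<Delta>\<bar>"
  using assms by (auto split: abs_split)

lemma mean_norm_bounds_via_gradient: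
  fixes g :: "'a::real_normed_vector \<Rightarrow> 'b::real_normed_vector"
    and s :: "'c \<Rightarrow> 'a" and y z :: 'a
  assumes A: "finite A" "A \<noteq> {}" and c: "0 \<le> c_a" "0 \<le> c_b"
    and bilip: "\<And>x. c_a * norm (g x - g z) \<le> norm (x - z) \<and> norm (x - z) \<le> c_b * norm (g x - g z)"
  defines "e \<equiv> (\<Sum>t\<in>A. norm (s t - z)) / real (card A)"
    and "a \<equiv> (\<Sum>t\<in>A. norm (g (s t) - g y)) / real (card A)"
  shows "c_a * \<bar>a - norm (g y - g z)\<bar> \<le> e" and "e \<le> c_b * (a + norm (g y - g z))"
proof -
  have n: "real (card A) > 0"
    using A by (simp add: card_gt_0_iff)
  have "\<bar>a - norm (g y - g z)\<bar> * real (card A) = \<bar>(a - norm (g y - g z)) * real (card A)\<bar>"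
    by (simp add: abs_mult)
  also have "(a - norm (g y - g z)) * real (card A)
               = (\<Sum>t\<in>A. norm (g (s t) - g y)) - real (card A) * norm (g y - g z)"
    using n by (simp add: a_def algebra_simps)
  finally have "c_a * \<bar>a - norm (g y - g z)\<bar> * real (card A) \<le> (\<Sum>t\<in>A. norm (s t - z))"
    using sum_norm_ge_via_gradient[of c_a A g s z y] bilip c by (simp add: mult.assoc)
  then show "c_a * \<bar>a - norm (g y - g z)\<bar> \<le> e"
    using n by (simp add: e_def field_simps)
  show "e \<le> c_b * (a + norm (g y - g z))"
    using sum_norm_le_via_gradient[of c_b A s z g y] bilip c n by (simp add: e_def a_def field_simps)
qed

theorem mainTheorem2:
  fixes g :: "'a::real_normed_vector \<Rightarrow> 'b::real_normed_vector"
    and s_o s_d :: 'a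
    and s :: "nat \<Rightarrow> 'a"
    and T :: nat
    and D c_a c_b c_0 c_2 p \<Delta> :: real
  assumes pos: "D > 0" "c_a > 0" "c_b > 0" "c_0 > 0" "c_2 > 0"
    and p: "0 < p" "p < 1"
    and cab: "c_a \<le> c_b" and c02: "c_0 \<le> c_2"
    and bilip: "\<And>s1 s2. c_a * norm (g s1 - g s2) \<le> norm (s1 - s2)
                         \<and> norm (s1 - s2) \<le> c_b * norm (g s1 - g s2)"
    and regret: "c_0 * real T powr p \<le> (\<Sum>t=1..T. norm (g (s t) - g s_d))"
                "(\<Sum>t=1..T. norm (g (s t) - g s_d)) \<le> c_2 * real T powr p"
    and bounded: "\<And>t. t \<in> {1..T} \<Longrightarrow> 0 \<le> norm (s t - s_o) \<and> norm (s t - s_o) \<le> D"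
    and D1: "c_b + c_b * c_2 \<le> D"
    and D2: "2 * c_2 * c_b / c_a \<le> D"
    and Delta: "\<Delta> = norm (g s_d - g s_o)"
  shows "(T = 0 \<longrightarrow> privacy_leakage D T s s_o = 0)
       \<and> (T > 0 \<longrightarrow>
            privacy_leakage D T s s_o \<ge> 1 - (c_b * \<Delta> + c_b * c_2 * real T powr (p - 1)) / D
          \<and> privacy_leakage D T s s_o \<le> 1
          \<and> ((\<Delta> \<ge> 2 * c_2 * c_b / c_a * real T powr (p - 1)
               \<or> \<Delta> \<le> c_a * c_0 / (2 * c_b) * real T powr (p - 1))
             \<longrightarrow> privacy_leakage D T s s_o \<le> 1 - (c_a * \<Delta> + c_a * c_0 * real T powr (p - 1)) / (4 * D)))"
proof (intro conjI impI)
  show "T = 0 \<Longrightarrow> privacy_leakage D T s s_o = 0"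
    by (simp add: privacy_leakage_def)
next
  assume T: "T > 0"
  define x where "x = real T powr (p - 1)"
  define e where "e = (\<Sum>t=1..T. norm (s t - s_o)) / real T"
  define a where "a = (\<Sum>t=1..T. norm (g (s t) - g s_d)) / real T"
  have V: "privacy_leakage D T s s_o = 1 - e / D"
    unfolding e_def using T by (rule privacy_leakage_eq_mean_error)
  have x: "x > 0" "real T powr p = real T * x"
    unfolding x_def using T by (simp_all add: powr_diff)
  have a: "c_0 * x \<le> a" "a \<le> c_2 * x"
    unfolding a_def using regret T x by (simp_all add: field_simps)
  have e: "c_a * \<bar>a - \<Delta>\<bar> \<le> e" "e \<le> c_b * (a + \<Delta>)"
    using mean_norm_bounds_via_gradient[of "{1..T}" c_a c_b g s_o s s_d] bilip pos T
    by (simp_all add: e_def a_def Delta)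
  have "e \<le> c_b * (c_2 * x + \<Delta>)"
    using e(2) a(2) pos(3) by (meson add_right_mono less_imp_le mult_left_mono order_trans)
  then have "e \<le> c_b * \<Delta> + c_b * c_2 * x"
    by (simp add: algebra_simps)
  then show "privacy_leakage D T s s_o \<ge> 1 - (c_b * \<Delta> + c_b * c_2 * x) / D"
    using V pos(1) by (simp add: divide_right_mono)
  have "0 \<le> c_a * \<bar>a - \<Delta>\<bar>"
    using pos(2) by simp
  then show "privacy_leakage D T s s_o \<le> 1"
    using V e(1) pos(1) by simp
  assume window: "2 * c_2 * c_b / c_a * x \<le> \<Delta> \<or> \<Delta> \<le> c_a * c_0 / (2 * c_b) * x"
  have "2 * (c_2 * x) \<le> 2 * c_2 * c_b / c_a * x" "c_a * c_0 / (2 * c_b) * x \<le> c_0 * x / 2"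
    using pos cab x by (simp_all add: field_simps mult_left_mono mult_right_mono)
  with window have "2 * (c_2 * x) \<le> \<Delta> \<or> \<Delta> \<le> c_0 * x / 2"
    by linarith
  then have "(\<Delta> + c_0 * x) / 4 \<le> \<bar>a - \<Delta>\<bar>"
    using a pos(4) x(1) by (intro abs_diff_ge_quarter_outside_window) simp_all
  then have "c_a * ((\<Delta> + c_0 * x) / 4) \<le> e"
    using e(1) pos(2) by (meson mult_left_mono less_imp_le order_trans)
  then show "privacy_leakage D T s s_o \<le> 1 - (c_a * \<Delta> + c_a * c_0 * x) / (4 * D)"
    using V pos(1) by (simp add: divide_right_mono distrib_left mult.assoc flip: divide_divide_eq_left)
qed

end
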